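(* Let $X$ and $Y$ be Banach spaces and let $T\in B(X)$ and $S\in B(Y)$ be compact operators that are equivalent after extension. Then there exist operators $G\in B(Y,X)$, $H\in B(X,Y)$ and a finite rank operator $R\in B(X)$ such that $T=GSH+R$.
   Context: All Banach spaces are complex; $B(X,Y)$ denotes the bounded linear operators from $X$ to $Y$, $B(X)=B(X,X)$; invertibility of an operator means it has a bounded inverse. $X\oplus Y$ denotes the $\ell^2$-direct sum and $\mathrm{id}_X$ the identity on $X$. Operators $T\in B(X)$ and $S\in B(Y)$ are called equivalent after extension if there exist Banach spaces $X'$, $Y'$ and invertible operators $E\in B(Y\oplus Y',X\oplus X')$ and $F\in B(X\oplus X',Y\oplus Y')$ with $\begin{bmatrix}T&0\\0&\mathrm{id}_{X'}\end{bmatrix}=E\begin{bmatrix}S&0\\0&\mathrm{id}_{Y'}\end{bmatrix}F$. *)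

theory Defs
  imports "HOL-Analysis.Analysis"
begin

class complex_banach = banach +
  fixes scaleC :: "complex \<Rightarrow> 'a \<Rightarrow> 'a"
  assumes scaleC_add_right: "scaleC c (x + y) = scaleC c x + scaleC c y"
    and scaleC_add_left: "scaleC (c + d) x = scaleC c x + scaleC d x"
    and scaleC_scaleC: "scaleC c (scaleC d x) = scaleC (c * d) x"
    and scaleC_one: "scaleC 1 x = x"
    and scaleR_scaleC: "scaleR r x = scaleC (complex_of_real r) x"
    and norm_scaleC: "norm (scaleC c x) = cmod c * norm x"

text \<open>The l2-direct sum X (+) Y is the product type, whose norm is
  sqrt (norm x ^ 2 + norm y ^ 2) (lemma norm_Pair).\<close>

instantiation prod :: (complex_banach, complex_banach) complex_banach
begin
definition scaleC_prod_def: "scaleC c p = (scaleC c (fst p), scaleC c (snd p))"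
instance
proof
  fix c d :: complex and x y :: "'a \<times> 'b" and r :: real
  show "scaleC c (x + y) = scaleC c x + scaleC c y"
    by (simp add: scaleC_prod_def scaleC_add_right)
  show "scaleC (c + d) x = scaleC c x + scaleC d x"
    by (simp add: scaleC_prod_def scaleC_add_left)
  show "scaleC c (scaleC d x) = scaleC (c * d) x"
    by (simp add: scaleC_prod_def scaleC_scaleC)
  show "scaleC 1 x = x" by (simp add: scaleC_prod_def scaleC_one)
  show "scaleR r x = scaleC (complex_of_real r) x"
    by (simp add: scaleC_prod_def scaleR_scaleC prod_eq_iff)
  show "norm (scaleC c x) = cmod c * norm x"
  proof -
    have "norm (scaleC c x) = sqrt ((cmod c)\<^sup>2 * ((norm (fst x))\<^sup>2 + (norm (snd x))\<^sup>2))"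
      by (simp add: scaleC_prod_def norm_prod_def norm_scaleC power_mult_distrib algebra_simps)
    also have "\<dots> = cmod c * norm x"
      by (simp add: real_sqrt_mult norm_prod_def)
    finally show ?thesis .
  qed
qed
end

definition bounded_clinear :: "('a::complex_banach \<Rightarrow> 'b::complex_banach) \<Rightarrow> bool" where
  "bounded_clinear f \<longleftrightarrow> bounded_linear f \<and> (\<forall>c x. f (scaleC c x) = scaleC c (f x))"

definition invertible_op :: "('a::complex_banach \<Rightarrow> 'b::complex_banach) \<Rightarrow> bool" where
  "invertible_op f \<longleftrightarrow> bounded_clinear f \<and>
     (\<exists>g. bounded_clinear g \<and> g \<circ> f = id \<and> f \<circ> g = id)"

definition diag_id :: "('a \<Rightarrow> 'a) \<Rightarrow> ('a \<times> 'c \<Rightarrow> 'a \<times> 'c)" where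
  "diag_id T = (\<lambda>(x, x'). (T x, x'))"

definition compact_op :: "('a::complex_banach \<Rightarrow> 'b::complex_banach) \<Rightarrow> bool" where
  "compact_op T \<longleftrightarrow> bounded_clinear T \<and> compact (closure (T ` ball 0 1))"

definition finite_rank :: "('a::complex_banach \<Rightarrow> 'b::complex_banach) \<Rightarrow> bool" where
  "finite_rank R \<longleftrightarrow> bounded_clinear R \<and>
     (\<exists>B. finite B \<and> range R \<subseteq> {\<Sum>b\<in>B. scaleC (c b) b | c. True})"

end

theory Submission
  imports Defs
begin

text \<open>
  Write E = [Eij] and F = [Fij] as 2x2 block operators. Comparing first columns in
  diag(T, id) = E diag(S, id) F gives T = E11 S F11 + E12 F21 and E21 S F11 + E22 F21 = 0,
  and multiplying by the inverses of E and F shows F22 E22 = I - K with K compact, since K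
  factors through T. By Riesz theory I - K has a bounded left inverse Q up to finite rank:
  ascent and descent of A = I - K are finite, so for large m the operator A^(m+1) is
  invertible on its range, and Q = (A^(m+1) restricted to its range)^-1 A^m satisfies
  y - Q A y \<in> N(A^m), a finite-dimensional space. Hence F21 = -Q F22 E21 S F11 up to finite
  rank, and T = (E11 - E12 Q F22 E21) S F11 up to finite rank.
\<close>

section \<open>Sequentially compact operators\<close>

text \<open>The sequential form of compactness is the one the Riesz theory below works with.\<close>

definition seq_compact_operator :: "('a::real_normed_vector \<Rightarrow> 'b::real_normed_vector) \<Rightarrow> bool" where
  "seq_compact_operator K \<longleftrightarrow> bounded_linear K \<and>
     (\<forall>x::nat \<Rightarrow> 'a. bounded (range x) \<longrightarrow> (\<exists>r l. strict_mono r \<and> (\<lambda>n. K (x (r n))) \<longlonglongrightarrow> l))"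

lemma seq_compact_operator_imp_bounded_linear:
  "seq_compact_operator K \<Longrightarrow> bounded_linear K"
  by (simp add: seq_compact_operator_def)

lemma seq_compact_operator_imp_linear: "seq_compact_operator K \<Longrightarrow> linear K"
  by (simp add: seq_compact_operator_def bounded_linear.linear)

lemma compact_op_imp_seq_compact_operator:
  assumes "compact_op T" shows "seq_compact_operator T"
  unfolding seq_compact_operator_def
proof (intro conjI allI impI)
  have cp: "compact (closure (T ` ball 0 1))" using assms by (simp add: compact_op_def)
  show bl: "bounded_linear T" using assms by (simp add: compact_op_def bounded_clinear_def)
  fix x :: "nat \<Rightarrow> 'a" assume "bounded (range x)"
  then obtain B where B: "B > 0" "\<And>n. norm (x n) \<le> B"
    by (meson bounded_pos rangeI)
  define y where "y n = T ((1 / (2 * B)) *\<^sub>R x n)" for n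
  have "y n \<in> closure (T ` ball 0 1)" for n
  proof -
    have "norm ((1 / (2 * B)) *\<^sub>R x n) < 1" using B(1) B(2)[of n] by (simp add: field_simps)
    then show ?thesis unfolding y_def by (intro closure_subset[THEN subsetD]) auto
  qed
  then obtain l r where r: "strict_mono r" "(y \<circ> r) \<longlonglongrightarrow> l"
    using cp unfolding compact_def by blast
  have "(\<lambda>n. (2 * B) *\<^sub>R y (r n)) \<longlonglongrightarrow> (2 * B) *\<^sub>R l"
    using r(2) by (intro tendsto_scaleR) (auto simp: o_def)
  moreover have "(2 * B) *\<^sub>R y (r n) = T (x (r n))" for n
    using B(1) by (simp add: y_def linear_scale[OF bounded_linear.linear[OF bl]])
  ultimately show "\<exists>r l. strict_mono r \<and> (\<lambda>n. T (x (r n))) \<longlonglongrightarrow> l"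
    using r(1) by auto
qed

lemma seq_compact_operator_zero: "seq_compact_operator (\<lambda>x. 0)"
  unfolding seq_compact_operator_def using strict_mono_id by (blast intro: bounded_linear_zero tendsto_const)

lemma seq_compact_operator_add:
  assumes "seq_compact_operator K" "seq_compact_operator L"
  shows "seq_compact_operator (\<lambda>x. K x + L x)"
  unfolding seq_compact_operator_def
proof (intro conjI allI impI)
  show "bounded_linear (\<lambda>x. K x + L x)"
    using assms by (intro bounded_linear_add seq_compact_operator_imp_bounded_linear)
  fix x :: "nat \<Rightarrow> 'a" assume bx: "bounded (range x)"
  obtain r1 l1 where r1: "strict_mono r1" "(\<lambda>n. K (x (r1 n))) \<longlonglongrightarrow> l1"
    using assms(1) bx unfolding seq_compact_operator_def by blast
  have "bounded (range (\<lambda>n. x (r1 n)))" using bx by (rule bounded_subset) auto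
  then obtain r2 l2 where r2: "strict_mono r2" "(\<lambda>n. L (x (r1 (r2 n)))) \<longlonglongrightarrow> l2"
    using assms(2) unfolding seq_compact_operator_def by blast
  have "(\<lambda>n. K (x (r1 (r2 n)))) \<longlonglongrightarrow> l1"
    using LIMSEQ_subseq_LIMSEQ[OF r1(2) r2(1)] by (simp add: o_def)
  with r2(2) have "(\<lambda>n. K (x ((r1 \<circ> r2) n)) + L (x ((r1 \<circ> r2) n))) \<longlonglongrightarrow> l1 + l2"
    by (simp add: tendsto_add)
  with strict_mono_o[OF r1(1) r2(1)]
  show "\<exists>r l. strict_mono r \<and> (\<lambda>n. K (x (r n)) + L (x (r n))) \<longlonglongrightarrow> l"
    by blast
qed

lemma seq_compact_operator_compose_left:
  fixes K :: "'a::real_normed_vector \<Rightarrow> 'b::real_normed_vector" and L :: "'b \<Rightarrow> 'c::real_normed_vector"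
  assumes "bounded_linear L" "seq_compact_operator K"
  shows "seq_compact_operator (\<lambda>x. L (K x))"
  unfolding seq_compact_operator_def
proof (intro conjI allI impI)
  show "bounded_linear (\<lambda>x. L (K x))"
    using assms bounded_linear_compose seq_compact_operator_imp_bounded_linear by blast
  fix x :: "nat \<Rightarrow> 'a" assume "bounded (range x)"
  then obtain r l where "strict_mono r" "(\<lambda>n. K (x (r n))) \<longlonglongrightarrow> l"
    using assms(2) unfolding seq_compact_operator_def by blast
  then show "\<exists>r l. strict_mono r \<and> (\<lambda>n. L (K (x (r n)))) \<longlonglongrightarrow> l"
    using bounded_linear.tendsto[OF assms(1)] by blast
qed

lemma seq_compact_operator_compose_right:
  fixes K :: "'b::real_normed_vector \<Rightarrow> 'c::real_normed_vector" and L :: "'a::real_normed_vector \<Rightarrow> 'b"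
  assumes "seq_compact_operator K" "bounded_linear L"
  shows "seq_compact_operator (\<lambda>x. K (L x))"
  unfolding seq_compact_operator_def
proof (intro conjI allI impI)
  show "bounded_linear (\<lambda>x. K (L x))"
    using assms bounded_linear_compose seq_compact_operator_imp_bounded_linear by blast
  fix x :: "nat \<Rightarrow> 'a" assume "bounded (range x)"
  then have "bounded (L ` range x)"
    using assms(2) bounded_linear_image by blast
  then have "bounded (range (\<lambda>n. L (x n)))" by (simp add: image_image)
  then show "\<exists>r l. strict_mono r \<and> (\<lambda>n. K (L (x (r n)))) \<longlonglongrightarrow> l"
    using assms(1) unfolding seq_compact_operator_def by blast
qed

lemma seq_compact_operator_no_separated_sequence:
  fixes x :: "nat \<Rightarrow> 'a::real_normed_vector"
  assumes "seq_compact_operator K" "bounded (range x)" "e > 0"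
  obtains i j where "i < j" "norm (K (x i) - K (x j)) < e"
proof -
  obtain r l where r: "strict_mono r" "(\<lambda>n. K (x (r n))) \<longlonglongrightarrow> l"
    using assms(1,2) unfolding seq_compact_operator_def by blast
  from LIMSEQ_imp_Cauchy[OF r(2)] assms(3)
  obtain M where M: "\<And>m n. m \<ge> M \<Longrightarrow> n \<ge> M \<Longrightarrow> dist (K (x (r m))) (K (x (r n))) < e"
    unfolding Cauchy_def by blast
  have "r M < r (Suc M)" using r(1) by (simp add: strict_mono_def)
  moreover have "norm (K (x (r M)) - K (x (r (Suc M)))) < e" using M[of M "Suc M"] by (simp add: dist_norm)
  ultimately show thesis by (rule that)
qed

lemma seq_compact_operator_id_minus_limit:
  fixes K :: "'a::real_normed_vector \<Rightarrow> 'a"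
  assumes "seq_compact_operator K" "bounded (range x)" "(\<lambda>n. x n - K (x n)) \<longlonglongrightarrow> y"
  obtains r z where "strict_mono r" "(\<lambda>n. x (r n)) \<longlonglongrightarrow> z" "z - K z = y"
proof -
  obtain r l where r: "strict_mono r" "(\<lambda>n. K (x (r n))) \<longlonglongrightarrow> l"
    using assms(1,2) unfolding seq_compact_operator_def by blast
  have y: "(\<lambda>n. x (r n) - K (x (r n))) \<longlonglongrightarrow> y"
    using LIMSEQ_subseq_LIMSEQ[OF assms(3) r(1)] by (simp add: o_def)
  have "(\<lambda>n. (x (r n) - K (x (r n))) + K (x (r n))) \<longlonglongrightarrow> y + l"
    using y r(2) by (rule tendsto_add)
  then have z: "(\<lambda>n. x (r n)) \<longlonglongrightarrow> y + l" by simp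
  have "(\<lambda>n. x (r n) - K (x (r n))) \<longlonglongrightarrow> (y + l) - K (y + l)"
    using z bounded_linear.tendsto[OF seq_compact_operator_imp_bounded_linear[OF assms(1)] z]
    by (rule tendsto_diff)
  with y have "(y + l) - K (y + l) = y" using LIMSEQ_unique by blast
  with r(1) z show thesis by (rule that)
qed

lemma tendsto_zero_if_norm_le_inverse_Suc:
  assumes "\<And>n. norm (f n) \<le> 1 / real (Suc n)" shows "f \<longlonglongrightarrow> 0"
proof (rule Lim_null_comparison)
  show "(\<lambda>n. 1 / real (Suc n)) \<longlonglongrightarrow> 0"
    using LIMSEQ_inverse_real_of_nat by (simp add: inverse_eq_divide)
qed (use assms in auto)

lemma bounded_linear_id_minus:
  "seq_compact_operator K \<Longrightarrow> bounded_linear (\<lambda>x. x - K x)"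
  by (intro bounded_linear_sub bounded_linear_ident seq_compact_operator_imp_bounded_linear)

lemma subspace_id_minus_kernel:
  "seq_compact_operator K \<Longrightarrow> subspace {x. x - K x = 0}"
  by (intro linear_subspace_kernel bounded_linear.linear bounded_linear_id_minus)

lemma seq_compact_operator_approx_fixed_point:
  fixes K :: "'a::real_normed_vector \<Rightarrow> 'a"
  assumes "seq_compact_operator K" "\<And>n. norm (u n) = 1" "\<And>n. norm (u n - K (u n)) \<le> 1 / real (Suc n)"
  obtains r z where "strict_mono r" "(\<lambda>n. u (r n)) \<longlonglongrightarrow> z" "z - K z = 0" "norm z = 1"
proof -
  have "bounded (range u)" using assms(2) by (auto simp: bounded_iff)
  moreover have "(\<lambda>n. u n - K (u n)) \<longlonglongrightarrow> 0"
    using assms(3) by (rule tendsto_zero_if_norm_le_inverse_Suc)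
  ultimately obtain r z where rz: "strict_mono r" "(\<lambda>n. u (r n)) \<longlonglongrightarrow> z" "z - K z = 0"
    using seq_compact_operator_id_minus_limit[OF assms(1)] by blast
  from tendsto_norm[OF rz(2)] have "norm z = 1" using assms(2) by (simp add: LIMSEQ_const_iff)
  with rz show thesis by (rule that)
qed

lemma seq_compact_operator_funpow_id_minus:
  fixes K :: "'a::real_normed_vector \<Rightarrow> 'a"
  assumes K: "seq_compact_operator K"
  shows "\<exists>Kn. seq_compact_operator Kn \<and> (\<lambda>x. x - K x) ^^ n = (\<lambda>x. x - Kn x)"
proof (induction n)
  case 0
  show ?case using seq_compact_operator_zero by (auto simp: fun_eq_iff)
next
  case (Suc n)
  then obtain Kn where Kn: "seq_compact_operator Kn" "(\<lambda>x. x - K x) ^^ n = (\<lambda>x. x - Kn x)" by blast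
  have lin: "linear K" using K by (rule seq_compact_operator_imp_linear)
  have "seq_compact_operator (\<lambda>x. K x + (Kn x - K (Kn x)))"
    using K seq_compact_operator_compose_left[OF bounded_linear_id_minus[OF K] Kn(1)]
    by (rule seq_compact_operator_add)
  moreover have "(\<lambda>x. x - K x) ^^ Suc n = (\<lambda>x. x - (K x + (Kn x - K (Kn x))))"
    by (simp add: Kn(2) fun_eq_iff linear_diff[OF lin] algebra_simps)
  ultimately show ?case by blast
qed

section \<open>Riesz's lemma\<close>

lemma infdist_lessE:
  assumes "A \<noteq> {}" "infdist x A < d"
  obtains a where "a \<in> A" "dist x a < d"
  using assms by (auto simp: infdist_notempty cINF_less_iff)

lemma riesz_near_best_approximation:
  fixes S :: "'a::real_normed_vector set"
  assumes "subspace S" "infdist x S > 0"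
  obtains a where "a \<in> S" "infdist x S \<le> norm (x - a)"
    "\<And>y. y \<in> S \<Longrightarrow> 1/2 \<le> norm ((1 / norm (x - a)) *\<^sub>R (x - a) - y)"
proof -
  define d where "d = infdist x S"
  obtain a where a: "a \<in> S" "dist x a < 2 * d"
    using infdist_lessE[of S x "2 * d"] subspace_0[OF assms(1)] assms(2) d_def by auto
  define t where "t = norm (x - a)"
  have dt: "d \<le> t" using infdist_le[OF a(1), of x] by (simp add: d_def t_def dist_norm)
  have t2: "t < 2 * d" using a(2) by (simp add: t_def dist_norm)
  have t0: "t > 0" using dt assms(2) d_def by simp
  have "1/2 \<le> norm ((1 / t) *\<^sub>R (x - a) - y)" if "y \<in> S" for y
  proof -
    have "a + t *\<^sub>R y \<in> S" using assms(1) a(1) that by (intro subspace_add subspace_scale)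
    then have "d \<le> dist x (a + t *\<^sub>R y)" unfolding d_def by (rule infdist_le)
    also have "\<dots> = norm (t *\<^sub>R ((1 / t) *\<^sub>R (x - a) - y))"
      using t0 by (simp add: dist_norm algebra_simps)
    also have "\<dots> = t * norm ((1 / t) *\<^sub>R (x - a) - y)" using t0 by simp
    finally have "t * (1/2) < t * norm ((1 / t) *\<^sub>R (x - a) - y)" using t2 by linarith
    then show ?thesis using t0 by (auto simp: mult_less_cancel_left_pos)
  qed
  with a(1) dt show thesis by (intro that) (auto simp: d_def t_def)
qed

lemma riesz_lemma:
  fixes S Z :: "'a::real_normed_vector set"
  assumes "subspace S" "closed S" "subspace Z" "S \<subseteq> Z" "z \<in> Z" "z \<notin> S"
  obtains u where "u \<in> Z" "norm u = 1" "\<And>y. y \<in> S \<Longrightarrow> 1/2 \<le> norm (u - y)"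
proof -
  have pos: "infdist z S > 0"
    using infdist_pos_not_in_closed[OF assms(2) _ assms(6)] subspace_0[OF assms(1)] by blast
  obtain a where a: "a \<in> S" "infdist z S \<le> norm (z - a)"
    "\<And>y. y \<in> S \<Longrightarrow> 1/2 \<le> norm ((1 / norm (z - a)) *\<^sub>R (z - a) - y)"
    using riesz_near_best_approximation[OF assms(1) pos] by blast
  show thesis
  proof (rule that[OF _ _ a(3)])
    show "(1 / norm (z - a)) *\<^sub>R (z - a) \<in> Z"
      using assms(3-5) a(1) by (intro subspace_scale subspace_diff) auto
    have "norm (z - a) > 0" using a(2) pos by linarith
    then show "norm ((1 / norm (z - a)) *\<^sub>R (z - a)) = 1" by simp
  qed
qed

lemma riesz_lemma_sequence:
  fixes U W :: "nat \<Rightarrow> 'a::real_normed_vector set"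
  assumes "\<And>n. subspace (U n)" "\<And>n. closed (U n)" "\<And>n. subspace (W n)" "\<And>n. U n \<subset> W n"
  obtains z :: "nat \<Rightarrow> 'a" where "\<And>n. z n \<in> W n" "\<And>n. norm (z n) = 1"
    "\<And>n y. y \<in> U n \<Longrightarrow> 1/2 \<le> norm (z n - y)"
proof -
  have "\<forall>n. \<exists>u. u \<in> W n \<and> norm u = 1 \<and> (\<forall>y\<in>U n. 1/2 \<le> norm (u - y))"
  proof
    fix n
    obtain w where "w \<in> W n" "w \<notin> U n" using assms(4)[of n] by blast
    then obtain u where "u \<in> W n" "norm u = 1" "\<And>y. y \<in> U n \<Longrightarrow> 1/2 \<le> norm (u - y)"
      using riesz_lemma[OF assms(1,2,3)] assms(4)[of n] by (metis psubsetE)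
    then show "\<exists>u. u \<in> W n \<and> norm u = 1 \<and> (\<forall>y\<in>U n. 1/2 \<le> norm (u - y))" by blast
  qed
  from choice[OF this] show thesis using that by blast
qed

lemma closed_span_insert:
  fixes a :: "'a::real_normed_vector"
  assumes closed: "closed (span S)" shows "closed (span (insert a S))"
proof (cases "a \<in> span S")
  case True
  then show ?thesis using closed by (simp add: span_redundant)
next
  case False
  define d where "d = infdist a (span S)"
  have d0: "d > 0"
    unfolding d_def using infdist_pos_not_in_closed[OF closed _ False] span_zero by blast
  show ?thesis unfolding closed_sequential_limits
  proof (intro allI impI, elim conjE)
    fix f l assume f: "\<forall>n. f n \<in> span (insert a S)" and fl: "f \<longlonglongrightarrow> l"
    obtain k where k: "\<And>n. f n - k n *\<^sub>R a \<in> span S"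
      using f choice[of "\<lambda>n k. f n - k *\<^sub>R a \<in> span S"] by (auto simp: span_insert)
    obtain B where B: "\<And>n. norm (f n) \<le> B"
      using convergent_imp_Bseq[of f] fl by (auto simp: convergent_def Bseq_def)
    have "\<bar>k n\<bar> * d \<le> norm (f n)" for n
    proof (cases "k n = 0")
      case False
      have "- (1 / k n) *\<^sub>R (f n - k n *\<^sub>R a) \<in> span S" using k[of n] by (rule span_scale)
      then have "d \<le> dist a (- (1 / k n) *\<^sub>R (f n - k n *\<^sub>R a))" unfolding d_def by (rule infdist_le)
      also have "\<dots> = norm (f n) / \<bar>k n\<bar>" using False by (simp add: dist_norm algebra_simps)
      finally show ?thesis using False by (simp add: field_simps)
    qed simp
    then have "\<bar>k n\<bar> \<le> B / d" for n using B[of n] d0 by (smt (verit) pos_le_divide_eq)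
    then have "bounded (range k)" by (auto simp: bounded_iff)
    then obtain \<kappa> r where r: "strict_mono r" "(k \<circ> r) \<longlonglongrightarrow> \<kappa>"
      using bounded_imp_convergent_subsequence by blast
    have "(\<lambda>n. f (r n) - k (r n) *\<^sub>R a) \<longlonglongrightarrow> l - \<kappa> *\<^sub>R a"
      using LIMSEQ_subseq_LIMSEQ[OF fl r(1)] r(2) by (intro tendsto_diff tendsto_scaleR) (auto simp: o_def)
    then show "l \<in> span (insert a S)"
      using closed_sequentially[OF closed, of "\<lambda>n. f (r n) - k (r n) *\<^sub>R a"] k by (auto simp: span_insert)
  qed
qed

lemma closed_span_finite:
  fixes S :: "'a::real_normed_vector set"
  assumes "finite S" shows "closed (span S)"
  using assms by (induction S rule: finite_induct) (auto intro: closed_span_insert)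

lemma riesz_separated_sequence:
  fixes F :: "'a::real_normed_vector set"
  assumes "subspace F" "\<And>S. finite S \<Longrightarrow> \<not> F \<subseteq> span S"
  obtains x :: "nat \<Rightarrow> 'a" where "\<And>n. x n \<in> F" "\<And>n. norm (x n) = 1" "\<And>i j. i < j \<Longrightarrow> 1/2 \<le> norm (x j - x i)"
proof -
  have "\<exists>z. z \<in> F \<and> norm z = 1 \<and> (\<forall>y\<in>span S. 1/2 \<le> norm (z - y))"
    if S: "finite S" "S \<subseteq> F" for S
  proof -
    obtain z where "z \<in> F" "z \<notin> span S" using assms(2)[OF S(1)] by blast
    moreover have "span S \<subseteq> F" using S(2) assms(1) by (rule span_minimal)
    ultimately show ?thesis
      using riesz_lemma[OF subspace_span closed_span_finite[OF S(1)] assms(1)] by metis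
  qed
  then obtain g where g: "\<And>S. finite S \<Longrightarrow> S \<subseteq> F \<Longrightarrow>
      g S \<in> F \<and> norm (g S) = 1 \<and> (\<forall>y\<in>span S. 1/2 \<le> norm (g S - y))"
    by metis
  \<comment> \<open>\<open>xs n = [x 0, \<dots>, x (n - 1)]\<close>, each new vector chosen far from the span of the previous ones\<close>
  define xs :: "nat \<Rightarrow> 'a list" where "xs = rec_nat [] (\<lambda>n l. l @ [g (set l)])"
  have xs_Suc: "xs (Suc n) = xs n @ [g (set (xs n))]" for n by (simp add: xs_def)
  have xs_F: "set (xs n) \<subseteq> F" for n
    by (induction n) (auto simp: xs_def g xs_Suc)
  define x where "x n = g (set (xs n))" for n
  have x: "x n \<in> F \<and> norm (x n) = 1 \<and> (\<forall>y\<in>span (set (xs n)). 1/2 \<le> norm (x n - y))" for n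
    unfolding x_def using g[OF _ xs_F] by simp
  have "x i \<in> set (xs j)" if "i < j" for i j
    using that by (induction j) (auto simp: xs_Suc x_def less_Suc_eq)
  then have "1/2 \<le> norm (x j - x i)" if "i < j" for i j
    using x[of j] that by (auto intro: span_base)
  with x show thesis by (intro that) auto
qed

section \<open>The operator \<open>I - K\<close> for compact \<open>K\<close>\<close>

lemma sequence_if_not_dominated:
  assumes "\<not> (\<exists>C>0. \<forall>x\<in>M. f x \<le> C * g x)"
  obtains x where "\<And>n. x n \<in> M" "\<And>n. real (Suc n) * g (x n) < f (x n)"
proof -
  have "\<exists>x\<in>M. real (Suc n) * g x < f x" for n
    using assms by (metis not_le of_nat_0_less_iff zero_less_Suc)
  then show thesis using that by metis
qed

lemma id_minus_scale:
  assumes "linear K" shows "c *\<^sub>R x - K (c *\<^sub>R x) = c *\<^sub>R (x - K x)"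
  by (simp add: linear_scale[OF assms] scaleR_diff_right)

lemma id_minus_bounded_below:
  fixes K :: "'a::real_normed_vector \<Rightarrow> 'a"
  assumes K: "seq_compact_operator K" and M: "closed M" "subspace M"
    and inj: "\<And>x. x \<in> M \<Longrightarrow> x - K x = 0 \<Longrightarrow> x = 0"
  shows "\<exists>C>0. \<forall>x\<in>M. norm x \<le> C * norm (x - K x)"
proof (rule ccontr)
  assume "\<not> ?thesis"
  then obtain x where x: "\<And>n. x n \<in> M" "\<And>n. real (Suc n) * norm (x n - K (x n)) < norm (x n)"
    by (rule sequence_if_not_dominated) blast
  have lin: "linear K" using K by (rule seq_compact_operator_imp_linear)
  have pos: "norm (x n) > 0" for n
  proof -
    have "0 \<le> real (Suc n) * norm (x n - K (x n))" by simp
    with x(2)[of n] show ?thesis by linarith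
  qed
  define u where "u n = (1 / norm (x n)) *\<^sub>R x n" for n
  have unit: "norm (u n) = 1" for n using pos[of n] by (simp add: u_def)
  have small: "norm (u n - K (u n)) \<le> 1 / real (Suc n)" for n
  proof -
    have "norm (u n - K (u n)) = norm (x n - K (x n)) / norm (x n)"
      by (simp add: u_def id_minus_scale[OF lin])
    also have "\<dots> \<le> 1 / real (Suc n)"
      using x(2)[of n] pos[of n] by (simp add: field_simps)
    finally show ?thesis .
  qed
  obtain r z where rz: "(\<lambda>n. u (r n)) \<longlonglongrightarrow> z" "z - K z = 0" "norm z = 1"
    using seq_compact_operator_approx_fixed_point[OF K unit small] by blast
  have "u n \<in> M" for n using x(1) M(2) by (simp add: u_def subspace_scale)
  then have "z \<in> M" using closed_sequentially[OF M(1) _ rz(1)] by blast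
  then have "z = 0" using inj rz(2) by blast
  with rz(3) show False by simp
qed

lemma id_minus_infdist_kernel:
  fixes K :: "'a::real_normed_vector \<Rightarrow> 'a"
  assumes K: "seq_compact_operator K"
  shows "\<exists>C>0. \<forall>x. infdist x {v. v - K v = 0} \<le> C * norm (x - K x)"
proof (rule ccontr)
  define N where "N = {v. v - K v = 0}"
  assume "\<not> ?thesis"
  then have "\<not> (\<exists>C>0. \<forall>x\<in>UNIV. infdist x N \<le> C * norm (x - K x))" by (simp add: N_def)
  then obtain x where x: "\<And>n. real (Suc n) * norm (x n - K (x n)) < infdist (x n) N"
    by (rule sequence_if_not_dominated) blast
  have lin: "linear K" using K by (rule seq_compact_operator_imp_linear)
  have N: "subspace N" unfolding N_def using K by (rule subspace_id_minus_kernel)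
  have pos: "infdist (x n) N > 0" for n
  proof -
    have "0 \<le> real (Suc n) * norm (x n - K (x n))" by simp
    with x[of n] show ?thesis by linarith
  qed
  have "\<forall>n. \<exists>a. a \<in> N \<and> infdist (x n) N \<le> norm (x n - a) \<and>
      (\<forall>y\<in>N. 1/2 \<le> norm ((1 / norm (x n - a)) *\<^sub>R (x n - a) - y))"
  proof
    fix n
    obtain a where "a \<in> N" "infdist (x n) N \<le> norm (x n - a)"
      "\<And>y. y \<in> N \<Longrightarrow> 1/2 \<le> norm ((1 / norm (x n - a)) *\<^sub>R (x n - a) - y)"
      by (rule riesz_near_best_approximation[OF N pos[of n]]) blast
    then show "\<exists>a. a \<in> N \<and> infdist (x n) N \<le> norm (x n - a) \<and>
      (\<forall>y\<in>N. 1/2 \<le> norm ((1 / norm (x n - a)) *\<^sub>R (x n - a) - y))" by blast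
  qed
  from choice[OF this] obtain a where a: "\<And>n. a n \<in> N" "\<And>n. infdist (x n) N \<le> norm (x n - a n)"
    "\<And>n y. y \<in> N \<Longrightarrow> 1/2 \<le> norm ((1 / norm (x n - a n)) *\<^sub>R (x n - a n) - y)"
    by blast
  define u where "u n = (1 / norm (x n - a n)) *\<^sub>R (x n - a n)" for n
  have dist_pos: "norm (x n - a n) > 0" for n using pos[of n] a(2)[of n] by linarith
  have unit: "norm (u n) = 1" for n using dist_pos[of n] by (simp add: u_def)
  have small: "norm (u n - K (u n)) \<le> 1 / real (Suc n)" for n
  proof -
    have "a n - K (a n) = 0" using a(1)[of n] unfolding N_def by (rule CollectD)
    then have fixed: "x n - a n - K (x n - a n) = x n - K (x n)"
      by (simp add: linear_diff[OF lin] algebra_simps)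
    have "u n - K (u n) = (1 / norm (x n - a n)) *\<^sub>R (x n - K (x n))"
      unfolding u_def id_minus_scale[OF lin] fixed ..
    then have "norm (u n - K (u n)) = norm (x n - K (x n)) / norm (x n - a n)" by simp
    also have "\<dots> \<le> 1 / real (Suc n)"
    proof -
      have "real (Suc n) * norm (x n - K (x n)) \<le> norm (x n - a n)"
        using x[of n] a(2)[of n] by linarith
      with dist_pos[of n] show ?thesis by (simp add: field_simps)
    qed
    finally show ?thesis .
  qed
  obtain r z where rz: "(\<lambda>n. u (r n)) \<longlonglongrightarrow> z" "z - K z = 0"
    using seq_compact_operator_approx_fixed_point[OF K unit small] by blast
  obtain n where "norm (u (r n) - z) < 1/2"
    using LIMSEQ_D[OF rz(1), of "1/2"] by auto
  moreover have "z \<in> N" using rz(2) unfolding N_def by (rule CollectI)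
  then have "1/2 \<le> norm (u (r n) - z)" unfolding u_def by (rule a(3))
  ultimately show False by linarith
qed

lemma id_minus_closed_range:
  fixes K :: "'a::real_normed_vector \<Rightarrow> 'a"
  assumes K: "seq_compact_operator K"
  shows "closed (range (\<lambda>x. x - K x))"
  unfolding closed_sequential_limits
proof (intro allI impI, elim conjE)
  define N where "N = {v. v - K v = 0}"
  have lin: "linear K" using K by (rule seq_compact_operator_imp_linear)
  obtain C where C: "C > 0" "\<And>x. infdist x N \<le> C * norm (x - K x)"
    using id_minus_infdist_kernel[OF K] unfolding N_def by blast
  fix f l assume f: "\<forall>n. f n \<in> range (\<lambda>x. x - K x)" and fl: "f \<longlonglongrightarrow> l"
  obtain B where B: "\<And>n. norm (f n) \<le> B"
    using convergent_imp_Bseq[of f] fl by (auto simp: convergent_def Bseq_def)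
  have "\<forall>n. \<exists>w. w - K w = f n \<and> norm w \<le> C * B + 1"
  proof
    fix n
    obtain x where x: "f n = x - K x" using f by auto
    have "infdist x N \<le> C * norm (f n)" using C(2)[of x] x by simp
    also have "\<dots> \<le> C * B" using C(1) B[of n] by (intro mult_left_mono) auto
    finally have "infdist x N < C * B + 1" by simp
    moreover have "0 \<in> N" using linear_0[OF lin] by (simp add: N_def)
    ultimately obtain a where a: "a \<in> N" "dist x a < C * B + 1"
      using infdist_lessE[of N x] by blast
    have "a - K a = 0" using a(1) unfolding N_def by (rule CollectD)
    then have "(x - a) - K (x - a) = f n" by (simp add: x linear_diff[OF lin] algebra_simps)
    with a(2) show "\<exists>w. w - K w = f n \<and> norm w \<le> C * B + 1" by (auto simp: dist_norm)
  qed
  from choice[OF this] obtain w where w: "\<And>n. w n - K (w n) = f n" "\<And>n. norm (w n) \<le> C * B + 1"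
    by blast
  have "bounded (range w)" using w(2) by (auto simp: bounded_iff)
  moreover have "(\<lambda>n. w n - K (w n)) \<longlonglongrightarrow> l" using fl w(1) by simp
  ultimately obtain r z where "z - K z = l" by (rule seq_compact_operator_id_minus_limit[OF K])
  then show "l \<in> range (\<lambda>x. x - K x)" by (metis rangeI)
qed

lemma id_minus_kernel_finite_dimensional:
  fixes K :: "'a::real_normed_vector \<Rightarrow> 'a"
  assumes K: "seq_compact_operator K"
  shows "\<exists>S. finite S \<and> {x. x - K x = 0} \<subseteq> span S"
proof (rule ccontr)
  assume "\<not> ?thesis"
  then have infinite: "\<not> {x. x - K x = 0} \<subseteq> span S" if "finite S" for S
    using that by blast
  obtain x :: "nat \<Rightarrow> 'a" where x: "\<And>n. x n \<in> {x. x - K x = 0}" "\<And>n. norm (x n) = 1"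
    "\<And>i j. i < j \<Longrightarrow> 1/2 \<le> norm (x j - x i)"
    using riesz_separated_sequence[OF subspace_id_minus_kernel[OF K] infinite] by blast
  have "bounded (range x)" using x(2) by (auto simp: bounded_iff)
  then obtain i j where ij: "i < j" "norm (K (x i) - K (x j)) < 1/2"
    using seq_compact_operator_no_separated_sequence[OF K, of x "1/2"] by auto
  have "K (x n) = x n" for n
  proof -
    have "x n - K (x n) = 0" using x(1)[of n] by (rule CollectD)
    then show ?thesis by (rule right_minus_eq[THEN iffD1, symmetric])
  qed
  then have "norm (x j - x i) < 1/2" using ij(2) by (simp add: norm_minus_commute)
  with x(3)[OF ij(1)] show False by linarith
qed

section \<open>Ascent, descent and a left regularizer\<close>

lemma scaleC_zero_right: "scaleC c (0::'a::complex_banach) = 0"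
  using scaleC_add_right[of c "0::'a" 0] by simp

lemma scaleC_diff_right: "scaleC c (x - y) = scaleC c x - scaleC c (y::'a::complex_banach)"
  using scaleC_add_right[of c "x - y" y] by (simp add: eq_diff_eq)

lemma funpow_scaleC:
  fixes f :: "'a::complex_banach \<Rightarrow> 'a"
  assumes "\<And>x. f (scaleC c x) = scaleC c (f x)"
  shows "(f ^^ n) (scaleC c x) = scaleC c ((f ^^ n) x)"
  by (induction n) (simp_all add: assms)

locale id_minus_compact =
  fixes K :: "'a::complex_banach \<Rightarrow> 'a"
  assumes compact: "seq_compact_operator K"
    and scaleC: "K (scaleC c x) = scaleC c (K x)"
begin

definition A :: "'a \<Rightarrow> 'a" where "A x = x - K x"

lemma A_power_id_minus_compact: "\<exists>Kn. seq_compact_operator Kn \<and> A ^^ n = (\<lambda>x. x - Kn x)"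
  using seq_compact_operator_funpow_id_minus[OF compact] by (simp add: A_def[abs_def])

lemma bounded_linear_A_power: "bounded_linear (A ^^ n)"
  using A_power_id_minus_compact[of n] bounded_linear_id_minus by metis

lemma linear_A_power: "linear (A ^^ n)"
  using bounded_linear_A_power bounded_linear.linear by blast

lemma A_power_scaleC: "(A ^^ n) (scaleC c x) = scaleC c ((A ^^ n) x)"
  by (rule funpow_scaleC) (simp add: A_def scaleC scaleC_diff_right)

definition null_pow :: "nat \<Rightarrow> 'a set" where "null_pow n = {x. (A ^^ n) x = 0}"

definition range_pow :: "nat \<Rightarrow> 'a set" where "range_pow n = range (A ^^ n)"

lemma subspace_null_pow: "subspace (null_pow n)"
  unfolding null_pow_def by (rule linear_subspace_kernel[OF linear_A_power])

lemma subspace_range_pow: "subspace (range_pow n)"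
  unfolding range_pow_def by (rule linear_subspace_image[OF linear_A_power subspace_UNIV])

lemma closed_null_pow: "closed (null_pow n)"
  unfolding null_pow_def
  by (intro closed_Collect_eq linear_continuous_on bounded_linear_A_power continuous_on_const)

lemma closed_range_pow: "closed (range_pow n)"
  using A_power_id_minus_compact[of n] id_minus_closed_range by (metis range_pow_def)

lemma null_pow_mono: "i \<le> j \<Longrightarrow> null_pow i \<subseteq> null_pow j"
  by (auto simp: null_pow_def add.commute[of i] funpow_add linear_0[OF linear_A_power] dest!: le_Suc_ex)

lemma range_pow_antimono: "i \<le> j \<Longrightarrow> range_pow j \<subseteq> range_pow i"
  by (auto simp: range_pow_def funpow_add dest!: le_Suc_ex)

lemma A_null_pow: "x \<in> null_pow (Suc n) \<Longrightarrow> A x \<in> null_pow n"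
  by (simp add: null_pow_def funpow_swap1)

lemma A_range_pow: "x \<in> range_pow n \<Longrightarrow> A x \<in> range_pow (Suc n)"
  by (auto simp: range_pow_def)

lemma ascent: "\<exists>p. null_pow (Suc p) \<subseteq> null_pow p"
proof (rule ccontr)
  assume "\<not> ?thesis"
  then have "null_pow p \<subset> null_pow (Suc p)" for p using null_pow_mono[of p "Suc p"] by auto
  then obtain z where z: "\<And>p. z p \<in> null_pow (Suc p)" "\<And>p. norm (z p) = 1"
    "\<And>p y. y \<in> null_pow p \<Longrightarrow> 1/2 \<le> norm (z p - y)"
    by (rule riesz_lemma_sequence[of null_pow "\<lambda>p. null_pow (Suc p)",
          OF subspace_null_pow closed_null_pow subspace_null_pow]) blast+
  have "bounded (range z)" using z(2) by (auto simp: bounded_iff)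
  then obtain i j where ij: "i < j" "norm (K (z i) - K (z j)) < 1/2"
    using seq_compact_operator_no_separated_sequence[OF compact, of z "1/2"] by auto
  have "A (z j) \<in> null_pow j" using z(1) by (rule A_null_pow)
  moreover have "z i \<in> null_pow j" using z(1)[of i] null_pow_mono[of "Suc i" j] ij(1) by auto
  moreover have "A (z i) \<in> null_pow j"
    using A_null_pow[OF z(1)[of i]] null_pow_mono[of i j] ij(1) by auto
  ultimately have "A (z j) + z i - A (z i) \<in> null_pow j"
    using subspace_null_pow by (intro subspace_diff subspace_add)
  then have "1/2 \<le> norm (z j - (A (z j) + z i - A (z i)))" by (rule z(3))
  also have "z j - (A (z j) + z i - A (z i)) = K (z j) - K (z i)" by (simp add: A_def)
  finally show False using ij(2) by (simp add: norm_minus_commute)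
qed

lemma descent: "\<exists>q. range_pow q \<subseteq> range_pow (Suc q)"
proof (rule ccontr)
  assume "\<not> ?thesis"
  then have "range_pow (Suc q) \<subset> range_pow q" for q using range_pow_antimono[of q "Suc q"] by auto
  then obtain z where z: "\<And>q. z q \<in> range_pow q" "\<And>q. norm (z q) = 1"
    "\<And>q y. y \<in> range_pow (Suc q) \<Longrightarrow> 1/2 \<le> norm (z q - y)"
    by (rule riesz_lemma_sequence[of "\<lambda>q. range_pow (Suc q)" range_pow,
          OF subspace_range_pow closed_range_pow subspace_range_pow]) blast+
  have "bounded (range z)" using z(2) by (auto simp: bounded_iff)
  then obtain i j where ij: "i < j" "norm (K (z i) - K (z j)) < 1/2"
    using seq_compact_operator_no_separated_sequence[OF compact, of z "1/2"] by auto
  have "A (z i) \<in> range_pow (Suc i)" using z(1) by (rule A_range_pow)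
  moreover have "z j \<in> range_pow (Suc i)" using z(1)[of j] range_pow_antimono[of "Suc i" j] ij(1) by auto
  moreover have "A (z j) \<in> range_pow (Suc i)"
    using A_range_pow[OF z(1)[of j]] range_pow_antimono[of "Suc i" "Suc j"] ij(1) by auto
  ultimately have "A (z i) + z j - A (z j) \<in> range_pow (Suc i)"
    using subspace_range_pow by (intro subspace_diff subspace_add)
  then have "1/2 \<le> norm (z i - (A (z i) + z j - A (z j)))" by (rule z(3))
  also have "z i - (A (z i) + z j - A (z j)) = K (z i) - K (z j)" by (simp add: A_def)
  finally show False using ij(2) by simp
qed

lemma null_pow_stable:
  assumes "null_pow (Suc p) \<subseteq> null_pow p" shows "null_pow (p + k) = null_pow p"
proof (induction k)
  case (Suc k)
  have "x \<in> null_pow p" if "x \<in> null_pow (p + Suc k)" for x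
  proof -
    have "(A ^^ Suc p) ((A ^^ k) x) = (A ^^ (p + Suc k)) x"
      by (metis add_Suc add_Suc_right comp_apply funpow_add)
    then have "(A ^^ k) x \<in> null_pow (Suc p)" using that by (simp add: null_pow_def)
    then have "(A ^^ p) ((A ^^ k) x) = 0" using assms by (auto simp: null_pow_def)
    then have "x \<in> null_pow (p + k)" by (simp add: null_pow_def funpow_add)
    then show ?thesis using Suc.IH by simp
  qed
  then show ?case using null_pow_mono[of p "p + Suc k"] by auto
qed simp

lemma range_pow_stable:
  assumes "range_pow p \<subseteq> range_pow (Suc p)" shows "range_pow (p + k) = range_pow p"
proof (induction k)
  case (Suc k)
  have "y \<in> range_pow (p + Suc k)" if "y \<in> range_pow p" for y
  proof -
    have "y \<in> range (A ^^ (k + p))" using that Suc.IH by (simp add: range_pow_def add.commute)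
    then obtain u where u: "y = (A ^^ (k + p)) u" by blast
    obtain w where "(A ^^ p) u = (A ^^ Suc p) w" using assms by (auto simp: range_pow_def)
    then have "y = (A ^^ (k + Suc p)) w" by (simp only: u funpow_add comp_apply)
    then show ?thesis by (simp add: range_pow_def add.commute)
  qed
  then show ?case using range_pow_antimono[of p "p + Suc k"] by auto
qed simp

lemma stable_index: "\<exists>m. \<forall>k. null_pow (m + k) = null_pow m \<and> range_pow (m + k) = range_pow m"
proof -
  obtain p where p: "null_pow (Suc p) \<subseteq> null_pow p" using ascent by blast
  obtain q where q: "range_pow q \<subseteq> range_pow (Suc q)" using descent by blast
  have "null_pow (p + q + k) = null_pow (p + q)" for k
    using null_pow_stable[OF p, of "q + k"] null_pow_stable[OF p, of q] by (simp add: add.assoc)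
  moreover have "range_pow (p + q + k) = range_pow (p + q)" for k
    using range_pow_stable[OF q, of "p + k"] range_pow_stable[OF q, of p] by (simp add: ac_simps)
  ultimately show ?thesis by blast
qed

end

locale id_minus_compact_stable = id_minus_compact +
  fixes m :: nat
  assumes null_stable: "null_pow (m + k) = null_pow m"
    and range_stable: "range_pow (m + k) = range_pow m"
begin

lemma A_power_twice: "(A ^^ Suc m) ((A ^^ Suc m) v) = (A ^^ (m + Suc (Suc m))) v"
  by (metis add_Suc add_Suc_right comp_apply funpow_add)

lemma range_pow_inter_null_pow:
  assumes "x \<in> range_pow (Suc m)" "(A ^^ Suc m) x = 0" shows "x = 0"
proof -
  obtain v where v: "x = (A ^^ Suc m) v" using assms(1) by (auto simp: range_pow_def)
  then have "(A ^^ (m + Suc (Suc m))) v = 0" using assms(2) by (simp only: A_power_twice)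
  then have "v \<in> null_pow (m + Suc (Suc m))" unfolding null_pow_def by (rule CollectI)
  then have "v \<in> null_pow m" unfolding null_stable .
  then have "v \<in> null_pow (Suc m)" using null_pow_mono[of m "Suc m"] by auto
  then show ?thesis using v by (simp add: null_pow_def del: funpow.simps)
qed

lemma range_pow_solvable: "\<exists>w\<in>range_pow (Suc m). (A ^^ Suc m) w = (A ^^ m) z"
proof -
  have "(A ^^ m) z \<in> range_pow (m + Suc (Suc m))" unfolding range_stable by (simp add: range_pow_def)
  then obtain v where "(A ^^ m) z = (A ^^ (m + Suc (Suc m))) v" unfolding range_pow_def by blast
  then have "(A ^^ m) z = (A ^^ Suc m) ((A ^^ Suc m) v)" by (simp only: A_power_twice)
  then show ?thesis by (auto simp: range_pow_def simp del: funpow.simps)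
qed

definition regularizer :: "'a \<Rightarrow> 'a" where
  "regularizer z = (THE w. w \<in> range_pow (Suc m) \<and> (A ^^ Suc m) w = (A ^^ m) z)"

lemma regularizer_unique:
  assumes "w \<in> range_pow (Suc m)" "(A ^^ Suc m) w = (A ^^ m) z"
  shows "regularizer z = w"
  unfolding regularizer_def
proof (rule the_equality)
  fix w' assume w': "w' \<in> range_pow (Suc m) \<and> (A ^^ Suc m) w' = (A ^^ m) z"
  have "w' - w \<in> range_pow (Suc m)" using w' assms(1) subspace_range_pow by (blast intro: subspace_diff)
  moreover have "(A ^^ Suc m) (w' - w) = 0"
    using w' assms(2) by (simp add: linear_diff[OF linear_A_power] del: funpow.simps)
  ultimately show "w' = w" using range_pow_inter_null_pow by fastforce
qed (use assms in blast)

lemma regularizer: "regularizer z \<in> range_pow (Suc m)" "(A ^^ Suc m) (regularizer z) = (A ^^ m) z"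
  using range_pow_solvable[of z] regularizer_unique by auto

lemma regularizer_add: "regularizer (x + y) = regularizer x + regularizer y"
  using regularizer[of x] regularizer[of y] subspace_range_pow
  by (intro regularizer_unique) (auto intro: subspace_add simp: linear_add[OF linear_A_power] simp del: funpow.simps)

lemma regularizer_scaleC: "regularizer (scaleC c x) = scaleC c (regularizer x)"
proof (rule regularizer_unique)
  obtain v where "regularizer x = (A ^^ Suc m) v" using regularizer(1) by (auto simp: range_pow_def)
  then show "scaleC c (regularizer x) \<in> range_pow (Suc m)"
    by (metis A_power_scaleC range_pow_def rangeI)
  show "(A ^^ Suc m) (scaleC c (regularizer x)) = (A ^^ m) (scaleC c x)"
    by (simp only: A_power_scaleC regularizer(2))
qed

lemma regularizer_bounded: "\<exists>C. \<forall>z. norm (regularizer z) \<le> norm z * C"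
proof -
  obtain Km where Km: "seq_compact_operator Km" "A ^^ Suc m = (\<lambda>x. x - Km x)"
    using A_power_id_minus_compact by blast
  have "\<exists>C>0. \<forall>w\<in>range_pow (Suc m). norm w \<le> C * norm (w - Km w)"
  proof (rule id_minus_bounded_below[OF Km(1) closed_range_pow subspace_range_pow])
    fix w assume w: "w \<in> range_pow (Suc m)" "w - Km w = 0"
    then have "(A ^^ Suc m) w = 0" by (simp only: Km(2))
    with w(1) show "w = 0" by (rule range_pow_inter_null_pow)
  qed
  then obtain C1 where C1: "C1 > 0" "\<And>w. w \<in> range_pow (Suc m) \<Longrightarrow> norm w \<le> C1 * norm ((A ^^ Suc m) w)"
    unfolding Km(2) by blast
  obtain C2 where C2: "\<And>z. norm ((A ^^ m) z) \<le> norm z * C2"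
    using bounded_linear.bounded[OF bounded_linear_A_power] by blast
  have "norm (regularizer z) \<le> norm z * (C1 * C2)" for z
  proof -
    have "norm (regularizer z) \<le> C1 * norm ((A ^^ m) z)"
      using C1(2)[OF regularizer(1)] by (simp only: regularizer(2))
    also have "\<dots> \<le> C1 * (norm z * C2)" using C1(1) C2 by (intro mult_left_mono) auto
    finally show ?thesis by (simp add: ac_simps)
  qed
  then show ?thesis by blast
qed

lemma bounded_clinear_regularizer: "bounded_clinear regularizer"
  unfolding bounded_clinear_def
proof (intro conjI allI)
  obtain C where "\<And>z. norm (regularizer z) \<le> norm z * C" using regularizer_bounded by blast
  then show "bounded_linear regularizer"
    by (intro bounded_linear_intro[of _ C] regularizer_add) (simp_all add: scaleR_scaleC regularizer_scaleC)
qed (rule regularizer_scaleC)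

lemma regularizer_left_inverse: "y - regularizer (A y) \<in> null_pow m"
proof -
  have "(A ^^ Suc m) (regularizer (A y)) = (A ^^ m) (A y)" by (rule regularizer(2))
  also have "\<dots> = (A ^^ Suc m) y" by (simp only: funpow_Suc_right comp_apply)
  finally have "y - regularizer (A y) \<in> null_pow (m + 1)"
    by (simp add: null_pow_def linear_diff[OF linear_A_power] del: funpow.simps)
  then show ?thesis using null_stable by blast
qed

end

lemma (in id_minus_compact) left_regularizer:
  "\<exists>Q B. bounded_clinear Q \<and> finite B \<and> (\<forall>y. y - Q (y - K y) \<in> span B)"
proof -
  obtain m where m: "\<And>k. null_pow (m + k) = null_pow m" "\<And>k. range_pow (m + k) = range_pow m"
    using stable_index by blast
  interpret id_minus_compact_stable K m by unfold_locales (use m in auto)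
  obtain Km where Km: "seq_compact_operator Km" "A ^^ m = (\<lambda>x. x - Km x)"
    using A_power_id_minus_compact by blast
  obtain B where "finite B" "null_pow m \<subseteq> span B"
    using id_minus_kernel_finite_dimensional[OF Km(1)] by (auto simp: null_pow_def Km(2))
  then show ?thesis
    using bounded_clinear_regularizer regularizer_left_inverse by (auto simp: A_def)
qed

section \<open>Equivalence after extension\<close>

lemma bounded_clinear_imp_bounded_linear: "bounded_clinear f \<Longrightarrow> bounded_linear f"
  by (simp add: bounded_clinear_def)

lemma bounded_clinear_imp_linear: "bounded_clinear f \<Longrightarrow> linear f"
  by (simp add: bounded_clinear_def bounded_linear.linear)

lemma bounded_clinear_scaleC: "bounded_clinear f \<Longrightarrow> f (scaleC c x) = scaleC c (f x)"
  by (simp add: bounded_clinear_def)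

lemma bounded_clinear_compose:
  "bounded_clinear f \<Longrightarrow> bounded_clinear g \<Longrightarrow> bounded_clinear (\<lambda>x. f (g x))"
  unfolding bounded_clinear_def using bounded_linear_compose[of f g] by auto

lemma bounded_clinear_add:
  "bounded_clinear f \<Longrightarrow> bounded_clinear g \<Longrightarrow> bounded_clinear (\<lambda>x. f x + g x)"
  unfolding bounded_clinear_def using bounded_linear_add[of f g] by (auto simp: scaleC_add_right)

lemma bounded_clinear_diff:
  "bounded_clinear f \<Longrightarrow> bounded_clinear g \<Longrightarrow> bounded_clinear (\<lambda>x. f x - g x)"
  unfolding bounded_clinear_def using bounded_linear_sub[of f g] by (auto simp: scaleC_diff_right)

lemma bounded_clinear_uminus: "bounded_clinear f \<Longrightarrow> bounded_clinear (\<lambda>x. - f x)"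
  using bounded_clinear_diff[of "\<lambda>x. 0" f]
  by (simp add: bounded_clinear_def bounded_linear_zero scaleC_zero_right)

lemma bounded_clinear_fst: "bounded_clinear fst"
  by (simp add: bounded_clinear_def bounded_linear_fst scaleC_prod_def)

lemma bounded_clinear_snd: "bounded_clinear snd"
  by (simp add: bounded_clinear_def bounded_linear_snd scaleC_prod_def)

lemma bounded_clinear_inl: "bounded_clinear (\<lambda>x. (x, 0))"
  by (simp add: bounded_clinear_def bounded_linear_Pair bounded_linear_ident bounded_linear_zero
      scaleC_prod_def scaleC_zero_right)

lemma bounded_clinear_inr: "bounded_clinear (\<lambda>x. (0, x))"
  by (simp add: bounded_clinear_def bounded_linear_Pair bounded_linear_ident bounded_linear_zero
      scaleC_prod_def scaleC_zero_right)

lemma finite_rank_if_range_subset_span: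
  fixes R :: "'a::complex_banach \<Rightarrow> 'b::complex_banach"
  assumes "bounded_clinear R" "finite B" "range R \<subseteq> span B"
  shows "finite_rank R"
  unfolding finite_rank_def
proof (intro conjI exI[of _ B] assms(1,2) subsetI)
  fix v assume "v \<in> range R"
  then obtain u where "v = (\<Sum>b\<in>B. u b *\<^sub>R b)" using assms(3) span_finite[OF assms(2)] by auto
  then have "v = (\<Sum>b\<in>B. scaleC (complex_of_real (u b)) b)" by (simp add: scaleR_scaleC)
  then show "v \<in> {\<Sum>b\<in>B. scaleC (c b) b | c. True}"
    unfolding mem_Collect_eq by (intro exI[of _ "\<lambda>b. complex_of_real (u b)"]) simp
qed

lemma factorization_modulo_finite_rank:
  fixes S :: "'y::complex_banach \<Rightarrow> 'y" and T :: "'x::complex_banach \<Rightarrow> 'x"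
    and J :: "'v::complex_banach \<Rightarrow> 'v"
  assumes bounded: "bounded_clinear S" "bounded_clinear G0" "bounded_clinear H"
      "bounded_clinear E12" "bounded_clinear F21" "bounded_clinear L" "bounded_clinear Q"
    and regular: "finite B" "\<And>z. z - Q (J z) \<in> span B"
    and T: "\<And>x. T x = G0 (S (H x)) + E12 (F21 x)"
    and J: "\<And>x. J (F21 x) = L (S (H x))"
  shows "\<exists>G H R. bounded_clinear (G :: 'y \<Rightarrow> 'x) \<and> bounded_clinear (H :: 'x \<Rightarrow> 'y)
           \<and> finite_rank (R :: 'x \<Rightarrow> 'x) \<and> T = (\<lambda>x. G (S (H x)) + R x)"
proof (intro exI conjI)
  let ?G = "\<lambda>y. G0 y + E12 (Q (L y))"
  let ?R = "\<lambda>x. E12 (F21 x - Q (L (S (H x))))"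
  show "bounded_clinear ?G"
    by (rule bounded_clinear_add[OF bounded(2) bounded_clinear_compose[OF bounded(4)
          bounded_clinear_compose[OF bounded(7) bounded(6)]]])
  show "bounded_clinear H" by (rule bounded(3))
  have "range ?R \<subseteq> E12 ` span B" using regular(2) J by (auto simp flip: J)
  also have "\<dots> = span (E12 ` B)" by (simp add: span_linear_image bounded_clinear_imp_linear[OF bounded(4)])
  finally have "range ?R \<subseteq> span (E12 ` B)" .
  moreover have "bounded_clinear ?R"
    by (rule bounded_clinear_compose[OF bounded(4) bounded_clinear_diff[OF bounded(5)
          bounded_clinear_compose[OF bounded(7) bounded_clinear_compose[OF bounded(6)
          bounded_clinear_compose[OF bounded(1) bounded(3)]]]]])
  ultimately show "finite_rank ?R"
    using regular(1) by (intro finite_rank_if_range_subset_span) auto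
  show "T = (\<lambda>x. ?G (S (H x)) + ?R x)"
    using T by (simp add: fun_eq_iff linear_diff[OF bounded_clinear_imp_linear[OF bounded(4)]])
qed

lemma diag_id_equation_first_column:
  assumes eq: "diag_id T = E \<circ> diag_id S \<circ> F" and E: "linear E"
  shows "T x = fst (E (S (fst (F (x, 0))), 0)) + fst (E (0, snd (F (x, 0))))"
    and "snd (E (0, snd (F (x, 0)))) = - snd (E (S (fst (F (x, 0))), 0))"
proof -
  have "(T x, 0) = E (S (fst (F (x, 0))), snd (F (x, 0)))"
    using fun_cong[OF eq, of "(x, 0)"] by (simp add: diag_id_def case_prod_unfold)
  also have "\<dots> = E (S (fst (F (x, 0))), 0) + E (0, snd (F (x, 0)))"
    using linear_add[OF E, of "(S (fst (F (x, 0))), 0)" "(0, snd (F (x, 0)))"] by simp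
  finally show "T x = fst (E (S (fst (F (x, 0))), 0)) + fst (E (0, snd (F (x, 0))))"
    and "snd (E (0, snd (F (x, 0)))) = - snd (E (S (fst (F (x, 0))), 0))"
    by (simp_all add: prod_eq_iff eq_neg_iff_add_eq_0 add.commute)
qed

lemma diag_id_equation_corner:
  assumes eq: "diag_id T = E \<circ> diag_id S \<circ> F"
    and inv: "Ei \<circ> E = id" "F \<circ> Fi = id" and Ei: "linear Ei" and zero: "T 0 = 0" "S 0 = 0"
  shows "y - snd (Ei (T (fst (Fi (0, y))), 0)) = snd (F (0, snd (E (0, y))))"
proof -
  have diag: "diag_id T p = E (diag_id S (F p))" for p using fun_cong[OF eq, of p] by simp
  have Ei_E: "Ei (E p) = p" for p using fun_cong[OF inv(1), of p] by simp
  have "E (0, y) = E (diag_id S (F (Fi (0, y))))"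
    using fun_cong[OF inv(2), of "(0, y)"] by (simp add: diag_id_def zero)
  also have "\<dots> = diag_id T (Fi (0, y))" by (rule diag[symmetric])
  finally have fst_E: "fst (E (0, y)) = T (fst (Fi (0, y)))"
    by (simp add: diag_id_def case_prod_unfold)
  have snd_Ei: "snd (Ei (0, v)) = snd (F (0, v))" for v
  proof -
    have "(0, v) = diag_id T (0, v)" by (simp add: diag_id_def zero)
    also have "\<dots> = E (diag_id S (F (0, v)))" by (rule diag)
    finally have "Ei (0, v) = diag_id S (F (0, v))" using Ei_E by metis
    then show ?thesis by (simp add: diag_id_def case_prod_unfold)
  qed
  have "(0, y) = Ei (fst (E (0, y)), 0) + Ei (0, snd (E (0, y)))"
    using linear_add[OF Ei, of "(fst (E (0, y)), 0)" "(0, snd (E (0, y)))"] by (simp add: Ei_E)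
  from arg_cong[OF this, of snd] show ?thesis by (simp add: fst_E snd_Ei algebra_simps)
qed

lemma bounded_clinear_blocks:
  fixes E :: "'a::complex_banach \<times> 'b::complex_banach \<Rightarrow> 'c::complex_banach \<times> 'd::complex_banach"
  assumes "bounded_clinear E"
  shows "bounded_clinear (\<lambda>x. fst (E (x, 0)))" "bounded_clinear (\<lambda>x. snd (E (x, 0)))"
    and "bounded_clinear (\<lambda>y. fst (E (0, y)))" "bounded_clinear (\<lambda>y. snd (E (0, y)))"
  using bounded_clinear_compose[OF bounded_clinear_fst bounded_clinear_compose[OF assms bounded_clinear_inl]]
    bounded_clinear_compose[OF bounded_clinear_snd bounded_clinear_compose[OF assms bounded_clinear_inl]]
    bounded_clinear_compose[OF bounded_clinear_fst bounded_clinear_compose[OF assms bounded_clinear_inr]]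
    bounded_clinear_compose[OF bounded_clinear_snd bounded_clinear_compose[OF assms bounded_clinear_inr]]
  by simp_all

lemma equivalence_corner_id_minus_compact:
  fixes T :: "'x::complex_banach \<Rightarrow> 'x" and S :: "'y::complex_banach \<Rightarrow> 'y"
    and E :: "'y \<times> 'y2::complex_banach \<Rightarrow> 'x \<times> 'x2::complex_banach" and F :: "'x \<times> 'x2 \<Rightarrow> 'y \<times> 'y2"
  assumes T: "compact_op T" and S: "bounded_clinear S" and E: "invertible_op E" and F: "invertible_op F"
    and eq: "diag_id T = E \<circ> diag_id S \<circ> F"
  obtains K :: "'y2 \<Rightarrow> 'y2"
  where "id_minus_compact K" "\<And>y. y - K y = snd (F (0, snd (E (0, y))))"
proof -
  obtain Ei where Ei: "bounded_clinear Ei" "Ei \<circ> E = id"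
    using E by (auto simp: invertible_op_def)
  obtain Fi where Fi: "bounded_clinear Fi" "F \<circ> Fi = id"
    using F by (auto simp: invertible_op_def)
  define K where "K y = snd (Ei (T (fst (Fi (0, y))), 0))" for y
  have T': "bounded_clinear T" using T by (simp add: compact_op_def)
  have "bounded_clinear K"
    unfolding K_def using bounded_clinear_compose[OF bounded_clinear_blocks(2)[OF Ei(1)]
      bounded_clinear_compose[OF T' bounded_clinear_blocks(3)[OF Fi(1)]]] .
  moreover have "seq_compact_operator K"
    unfolding K_def
    using seq_compact_operator_compose_left[OF
        bounded_clinear_imp_bounded_linear[OF bounded_clinear_blocks(2)[OF Ei(1)]]
        seq_compact_operator_compose_right[OF compact_op_imp_seq_compact_operator[OF T]
          bounded_clinear_imp_bounded_linear[OF bounded_clinear_blocks(3)[OF Fi(1)]]]] .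
  ultimately have "id_minus_compact K" by unfold_locales (auto simp: bounded_clinear_scaleC)
  moreover have "y - K y = snd (F (0, snd (E (0, y))))" for y
    unfolding K_def using eq Ei(2) Fi(2) bounded_clinear_imp_linear[OF Ei(1)]
    by (rule diag_id_equation_corner) (simp_all add: linear_0 bounded_clinear_imp_linear T' S)
  ultimately show thesis by (rule that)
qed

theorem proposition2p2:
  fixes T :: "'x::complex_banach \<Rightarrow> 'x"
    and S :: "'y::complex_banach \<Rightarrow> 'y"
    and E :: "'y \<times> 'y2::complex_banach \<Rightarrow> 'x \<times> 'x2::complex_banach"
    and F :: "'x \<times> 'x2 \<Rightarrow> 'y \<times> 'y2"
  assumes "compact_op T" and "compact_op S"
    and "invertible_op E" and "invertible_op F"
    and "diag_id T = E \<circ> diag_id S \<circ> F"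
  shows "\<exists>G H R. bounded_clinear (G :: 'y \<Rightarrow> 'x) \<and> bounded_clinear (H :: 'x \<Rightarrow> 'y)
           \<and> finite_rank (R :: 'x \<Rightarrow> 'x) \<and> T = (\<lambda>x. G (S (H x)) + R x)"
proof -
  have S: "bounded_clinear S" using assms(2) by (simp add: compact_op_def)
  have E: "bounded_clinear E" and F: "bounded_clinear F"
    using assms(3,4) by (simp_all add: invertible_op_def)
  obtain K where K: "id_minus_compact K" "\<And>y. y - K y = snd (F (0, snd (E (0, y))))"
    using equivalence_corner_id_minus_compact[OF assms(1) S assms(3-5)] by blast
  obtain Q B where Q: "bounded_clinear Q" "finite B" "\<And>y. y - Q (y - K y) \<in> span B"
    using id_minus_compact.left_regularizer[OF K(1)] by blast
  show ?thesis
  proof (rule factorization_modulo_finite_rank[OF S bounded_clinear_blocks(1)[OF E]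
        bounded_clinear_blocks(1)[OF F] bounded_clinear_blocks(3)[OF E] bounded_clinear_blocks(2)[OF F]
        _ Q(1,2)])
    show "bounded_clinear (\<lambda>y. - snd (F (0, snd (E (y, 0)))))"
      by (rule bounded_clinear_uminus[OF bounded_clinear_compose[OF bounded_clinear_blocks(4)[OF F]
            bounded_clinear_blocks(2)[OF E]]])
    show "z - Q (snd (F (0, snd (E (0, z))))) \<in> span B" for z using Q(3)[of z] by (simp only: K(2))
    fix x
    show "T x = fst (E (S (fst (F (x, 0))), 0)) + fst (E (0, snd (F (x, 0))))"
      using diag_id_equation_first_column(1)[OF assms(5) bounded_clinear_imp_linear[OF E]] .
    show "snd (F (0, snd (E (0, snd (F (x, 0)))))) = - snd (F (0, snd (E (S (fst (F (x, 0))), 0))))"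
      by (simp add: diag_id_equation_first_column(2)[OF assms(5) bounded_clinear_imp_linear[OF E]]
          linear_neg[OF bounded_clinear_imp_linear[OF bounded_clinear_blocks(4)[OF F]]])
  qed
qed

end
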